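(* Let $F$ be $\mathbb{C}$ or $\mathbb{R}$ and let $\mathfrak{L}$ be a solvable (left) Leibniz algebra over $F$ of dimension $r+1$ whose nilradical is the $r$-dimensional abelian algebra $A(r)$, so that $\mathfrak{L}$ has a basis $\{n_1,\dots,n_r,x\}$ with $n_1,\dots,n_r$ a basis of $A(r)$. Let $R\in F^{r\times r}$ be the matrix defined by $[n_i,x]=\sum_j R_{ij}n_j$ (the right action of $x$ on $A(r)$). If $R$ is nonsingular, then $\mathfrak{L}$ is a Lie algebra, i.e. $[y,z]=-[z,y]$ for all $y,z\in\mathfrak{L}$.
   Context: A (left) Leibniz algebra is a vector space with bilinear product satisfying $[x,[y,z]]=[[x,y],z]+[y,[x,z]]$. Solvable: derived series $\mathfrak{L}^{(1)}=[\mathfrak{L},\mathfrak{L}]$, $\mathfrak{L}^{(n+1)}=[\mathfrak{L}^{(n)},\mathfrak{L}^{(n)}]$ eventually zero. Nilradical: the unique maximal nilpotent ideal (nilpotent meaning the lower central series $\mathfrak{L}^2=[\mathfrak{L},\mathfrak{L}]$, $\mathfrak{L}^{k+1}=[\mathfrak{L},\mathfrak{L}^k]$ eventually vanishes). $A(r)$ is the $r$-dimensional algebra with all products zero. *)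

theory Defs
  imports Complex_Main "Jordan_Normal_Form.Determinant"
begin

definition leibniz_algebra :: "('k::field \<Rightarrow> 'v::ab_group_add \<Rightarrow> 'v) \<Rightarrow> ('v \<Rightarrow> 'v \<Rightarrow> 'v) \<Rightarrow> bool" where
  "leibniz_algebra sc br \<longleftrightarrow>
     vector_space sc \<and>
     (\<forall>a b c. br (a + b) c = br a c + br b c) \<and>
     (\<forall>a b c. br a (b + c) = br a b + br a c) \<and>
     (\<forall>k a b. br (sc k a) b = sc k (br a b)) \<and>
     (\<forall>k a b. br a (sc k b) = sc k (br a b)) \<and>
     (\<forall>x y z. br x (br y z) = br (br x y) z + br y (br x z))"

definition brset :: "('k::field \<Rightarrow> 'v::ab_group_add \<Rightarrow> 'v) \<Rightarrow> ('v \<Rightarrow> 'v \<Rightarrow> 'v) \<Rightarrow> 'v set \<Rightarrow> 'v set \<Rightarrow> 'v set" where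
  "brset sc br A B = module.span sc {br a b | a b. a \<in> A \<and> b \<in> B}"

fun derived :: "('k::field \<Rightarrow> 'v::ab_group_add \<Rightarrow> 'v) \<Rightarrow> ('v \<Rightarrow> 'v \<Rightarrow> 'v) \<Rightarrow> nat \<Rightarrow> 'v set" where
  "derived sc br 0 = UNIV"
| "derived sc br (Suc n) = brset sc br (derived sc br n) (derived sc br n)"

definition solvable :: "('k::field \<Rightarrow> 'v::ab_group_add \<Rightarrow> 'v) \<Rightarrow> ('v \<Rightarrow> 'v \<Rightarrow> 'v) \<Rightarrow> bool" where
  "solvable sc br \<longleftrightarrow> (\<exists>n. derived sc br n = {0})"

definition is_ideal :: "('k::field \<Rightarrow> 'v::ab_group_add \<Rightarrow> 'v) \<Rightarrow> ('v \<Rightarrow> 'v \<Rightarrow> 'v) \<Rightarrow> 'v set \<Rightarrow> bool" where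
  "is_ideal sc br I \<longleftrightarrow> module.subspace sc I \<and> (\<forall>y z. z \<in> I \<longrightarrow> br y z \<in> I \<and> br z y \<in> I)"

text \<open>Lower central series of a subalgebra I: I^1 = I, I^(k+1) = [I, I^k]
  (indexed here from 0: lcs 0 = I^1).\<close>
fun lcs :: "('k::field \<Rightarrow> 'v::ab_group_add \<Rightarrow> 'v) \<Rightarrow> ('v \<Rightarrow> 'v \<Rightarrow> 'v) \<Rightarrow> 'v set \<Rightarrow> nat \<Rightarrow> 'v set" where
  "lcs sc br I 0 = I"
| "lcs sc br I (Suc k) = brset sc br I (lcs sc br I k)"

definition nilpotent_sub :: "('k::field \<Rightarrow> 'v::ab_group_add \<Rightarrow> 'v) \<Rightarrow> ('v \<Rightarrow> 'v \<Rightarrow> 'v) \<Rightarrow> 'v set \<Rightarrow> bool" where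
  "nilpotent_sub sc br I \<longleftrightarrow> (\<exists>k. lcs sc br I k = {0})"

definition is_nilradical :: "('k::field \<Rightarrow> 'v::ab_group_add \<Rightarrow> 'v) \<Rightarrow> ('v \<Rightarrow> 'v \<Rightarrow> 'v) \<Rightarrow> 'v set \<Rightarrow> bool" where
  "is_nilradical sc br N \<longleftrightarrow> is_ideal sc br N \<and> nilpotent_sub sc br N \<and>
     (\<forall>J. is_ideal sc br J \<and> nilpotent_sub sc br J \<longrightarrow> J \<subseteq> N)"

definition lemma4p2_claim :: "('k::field \<Rightarrow> 'v::ab_group_add \<Rightarrow> 'v) \<Rightarrow> ('v \<Rightarrow> 'v \<Rightarrow> 'v) \<Rightarrow> bool" where
  "lemma4p2_claim sc br \<longleftrightarrow>
    (\<forall>(r::nat) (N::'v set) (n::nat \<Rightarrow> 'v) (x::'v) (R::'k mat).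
      leibniz_algebra sc br \<longrightarrow> solvable sc br \<longrightarrow>
      is_nilradical sc br N \<longrightarrow>
      (\<forall>a\<in>N. \<forall>b\<in>N. br a b = 0) \<longrightarrow>
      inj_on n {..<r} \<longrightarrow> x \<notin> n ` {..<r} \<longrightarrow>
      \<not> module.dependent sc (insert x (n ` {..<r})) \<longrightarrow>
      module.span sc (insert x (n ` {..<r})) = UNIV \<longrightarrow>
      module.span sc (n ` {..<r}) = N \<longrightarrow>
      R \<in> carrier_mat r r \<longrightarrow>
      (\<forall>i<r. br (n i) x = (\<Sum>j<r. sc (R $$ (i, j)) (n j))) \<longrightarrow>
      det R \<noteq> 0 \<longrightarrow>
      (\<forall>y z. br y z = - br z y))"

end

theory Submission
  imports Defs
begin

text \<open>In a left Leibniz algebra every square left-annihilates, [[a,a],c] = 0, hence so does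
  every symmetrised product s = [a,b] + [b,a]; in particular [s,x] = 0. Nonsingularity of R makes right multiplication
  by x injective on the abelian ideal N. For m in N the element [x,m] + [m,x] lies in N and
  is killed by x, hence vanishes. Writing [x,x] = k x + m with m in N, the identity
  [[x,x],x] = 0 gives k^2 x in N, so k = 0, and then [m,x] = 0 forces [x,x] = 0.
  Bilinearity now yields antisymmetry on all of L.\<close>

lemma leibniz_algebra_vector_space: "leibniz_algebra sc br \<Longrightarrow> vector_space sc"
  unfolding leibniz_algebra_def by blast

lemma leibniz_algebra_bilinear:
  assumes "leibniz_algebra sc br"
  shows "br (a + b) c = br a c + br b c" and "br a (b + c) = br a b + br a c"
    and "br (sc k a) b = sc k (br a b)" and "br a (sc k b) = sc k (br a b)"
  using assms unfolding leibniz_algebra_def by blast+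

lemma leibniz_algebra_left_square_zero:
  assumes "leibniz_algebra sc br"
  shows "br (br a a) c = 0"
proof -
  have "br a (br a c) = br (br a a) c + br a (br a c)"
    using assms unfolding leibniz_algebra_def by blast
  then show ?thesis by simp
qed

lemma leibniz_algebra_left_symmetrized_zero:
  assumes L: "leibniz_algebra sc br"
  shows "br (br a b + br b a) c = 0"
proof -
  have "br (br (a + b) (a + b)) c = 0"
    using L by (rule leibniz_algebra_left_square_zero)
  then show ?thesis
    using leibniz_algebra_left_square_zero[OF L, of a c] leibniz_algebra_left_square_zero[OF L, of b c]
    by (simp add: leibniz_algebra_bilinear[OF L] add_ac)
qed

context vector_space
begin

lemma span_family_sum:
  fixes n :: "nat \<Rightarrow> 'b" and r :: nat
  assumes "inj_on n {..<r}" and "u \<in> span (n ` {..<r})"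
  obtains c where "u = (\<Sum>i<r. scale (c i) (n i))"
proof -
  have "finite (n ` {..<r})" by simp
  then obtain d where "u = (\<Sum>v\<in>n ` {..<r}. scale (d v) v)"
    using assms(2) span_finite by blast
  then have "u = (\<Sum>i<r. scale (d (n i)) (n i))"
    using assms(1) by (simp add: sum.reindex)
  then show thesis by (rule that)
qed

lemma independent_family_coeffs_zero:
  fixes n :: "nat \<Rightarrow> 'b" and r :: nat
  assumes inj: "inj_on n {..<r}" and indep: "independent (n ` {..<r})"
    and sum0: "(\<Sum>i<r. scale (c i) (n i)) = 0" and i: "i < r"
  shows "c i = 0"
proof -
  define d where "d v = c (the_inv_into {..<r} n v)" for v
  have "(\<Sum>v\<in>n ` {..<r}. scale (d v) v) = 0"
    using inj sum0 by (simp add: sum.reindex d_def the_inv_into_f_f)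
  moreover have "finite (n ` {..<r})" by simp
  ultimately have "\<forall>v\<in>n ` {..<r}. d v = 0"
    using indep dependent_finite by blast
  then show ?thesis
    using i inj by (auto simp: d_def the_inv_into_f_f)
qed

end

lemma nonsingular_mat_left_kernel_zero:
  fixes R :: "'k::field mat"
  assumes R: "R \<in> carrier_mat r r" and det: "det R \<noteq> 0"
    and kernel: "\<forall>j<r. (\<Sum>i<r. c i * R $$ (i, j)) = 0" and i: "i < r"
  shows "c i = 0"
proof -
  define w where "w = vec r c"
  have RT: "transpose_mat R \<in> carrier_mat r r" using R by simp
  have "transpose_mat R *\<^sub>v w = 0\<^sub>v r"
  proof (rule eq_vecI)
    fix j assume "j < dim_vec (0\<^sub>v r :: 'k vec)"
    then have j: "j < r" by simp
    have "(transpose_mat R *\<^sub>v w) $ j = row (transpose_mat R) j \<bullet> w"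
      using j RT by simp
    also have "\<dots> = (\<Sum>i<r. R $$ (i, j) * c i)"
      using j R unfolding w_def scalar_prod_def by (auto intro!: sum.cong simp: lessThan_atLeast0)
    also have "\<dots> = 0" using kernel j by (simp add: mult.commute)
    finally show "(transpose_mat R *\<^sub>v w) $ j = 0\<^sub>v r $ j" using j by simp
  qed (use RT in simp)
  moreover have "det (transpose_mat R) \<noteq> 0" using det det_transpose[OF R] by simp
  moreover have "w \<in> carrier_vec r" unfolding w_def by simp
  ultimately have "w = 0\<^sub>v r"
    using det_0_iff_vec_prod_zero_field[OF RT] by blast
  then show ?thesis using i unfolding w_def by (metis index_vec index_zero_vec(1))
qed

locale leibniz_abelian_extension =
  fixes sc :: "'k::field \<Rightarrow> 'v::ab_group_add \<Rightarrow> 'v" and br :: "'v \<Rightarrow> 'v \<Rightarrow> 'v"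
    and N :: "'v set" and n :: "nat \<Rightarrow> 'v" and r :: nat and x :: 'v and R :: "'k mat"
  assumes leibniz: "leibniz_algebra sc br"
    and ideal: "is_ideal sc br N"
    and abelian: "\<forall>a\<in>N. \<forall>b\<in>N. br a b = 0"
    and basis_inj: "inj_on n {..<r}"
    and x_notin_basis: "x \<notin> n ` {..<r}"
    and basis_independent: "\<not> module.dependent sc (insert x (n ` {..<r}))"
    and basis_spans: "module.span sc (insert x (n ` {..<r})) = UNIV"
    and N_span: "module.span sc (n ` {..<r}) = N"
    and R_carrier: "R \<in> carrier_mat r r"
    and right_action: "\<forall>i<r. br (n i) x = (\<Sum>j<r. sc (R $$ (i, j)) (n j))"
    and det_R: "det R \<noteq> 0"
begin

sublocale vector_space sc
  using leibniz by (rule leibniz_algebra_vector_space)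

lemmas br_bilinear = leibniz_algebra_bilinear[OF leibniz]

lemma br_zero_left: "br 0 c = 0"
  using br_bilinear(1)[of 0 0 c] by simp

lemma br_sum_left: "br (\<Sum>i\<in>A. f i) c = (\<Sum>i\<in>A. br (f i) c)"
  by (induction A rule: infinite_finite_induct) (auto simp: br_zero_left br_bilinear(1))

lemma x_notin_N: "x \<notin> N"
  using basis_independent x_notin_basis N_span independent_insert by auto

lemma decompose_along_x: obtains k m where "m \<in> N" and "y = sc k x + m"
proof -
  have "y \<in> span (insert x (n ` {..<r}))" using basis_spans by simp
  then obtain k where "y - sc k x \<in> N" using N_span span_insert by blast
  then show thesis by (metis that add.commute diff_add_cancel)
qed

lemma right_mult_x_injective:
  assumes u: "u \<in> N" and ux: "br u x = 0"
  shows "u = 0"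
proof -
  obtain c where u_sum: "u = (\<Sum>i<r. sc (c i) (n i))"
    using span_family_sum[OF basis_inj] u N_span by blast
  have "br u x = (\<Sum>i<r. \<Sum>j<r. sc (c i * R $$ (i, j)) (n j))"
    using right_action by (simp add: u_sum br_sum_left br_bilinear(3) scale_sum_right)
  also have "\<dots> = (\<Sum>j<r. sc (\<Sum>i<r. c i * R $$ (i, j)) (n j))"
    by (subst sum.swap) (simp add: scale_sum_left)
  finally have "(\<Sum>j<r. sc (\<Sum>i<r. c i * R $$ (i, j)) (n j)) = 0" using ux by simp
  then have "\<forall>j<r. (\<Sum>i<r. c i * R $$ (i, j)) = 0"
    using independent_family_coeffs_zero[OF basis_inj] basis_independent dependent_mono
    by (metis subset_insertI)
  then have "\<forall>i<r. c i = 0"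
    using nonsingular_mat_left_kernel_zero[OF R_carrier det_R] by blast
  then show ?thesis by (simp add: u_sum)
qed

lemma x_anticommutes_N:
  assumes m: "m \<in> N"
  shows "br x m = - br m x"
proof -
  have "br x m + br m x \<in> N"
    using ideal m subspace_add unfolding is_ideal_def by blast
  moreover have "br (br x m + br m x) x = 0"
    using leibniz by (rule leibniz_algebra_left_symmetrized_zero)
  ultimately have "br x m + br m x = 0" by (rule right_mult_x_injective)
  then show ?thesis by (simp add: eq_neg_iff_add_eq_0)
qed

lemma x_square_zero: "br x x = 0"
proof -
  obtain k m where m: "m \<in> N" and xx: "br x x = sc k x + m"
    using decompose_along_x .
  have "0 = br (br x x) x"
    using leibniz by (simp add: leibniz_algebra_left_square_zero)
  also have "\<dots> = sc (k * k) x + (sc k m + br m x)"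
    by (simp add: xx br_bilinear scale_right_distrib add_ac)
  finally have kkx: "sc (k * k) x = - (sc k m + br m x)"
    by (metis eq_neg_iff_add_eq_0)
  have "k = 0"
  proof (rule ccontr)
    assume "k \<noteq> 0"
    have "sc k m + br m x \<in> N"
      using ideal m subspace_add subspace_scale unfolding is_ideal_def by blast
    then have "sc (inverse (k * k)) (sc (k * k) x) \<in> N"
      using ideal unfolding kkx is_ideal_def by (blast intro: subspace_neg subspace_scale)
    then show False using \<open>k \<noteq> 0\<close> x_notin_N by (simp add: field_simps)
  qed
  with xx have "br x x = m" by simp
  moreover have "br m x = 0"
    using leibniz_algebra_left_square_zero[OF leibniz, of x x] \<open>br x x = m\<close> by simp
  ultimately show ?thesis using right_mult_x_injective m by simp
qed

lemma br_antisymmetric: "br y z = - br z y"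
proof -
  obtain a m where m: "m \<in> N" and y: "y = sc a x + m" using decompose_along_x .
  obtain b m' where m': "m' \<in> N" and z: "z = sc b x + m'" using decompose_along_x .
  have "br m m' = 0" and "br m' m = 0" using abelian m m' by auto
  then have "br y z + br z y = 0"
    using m m' by (simp add: y z br_bilinear x_square_zero x_anticommutes_N
        scale_minus_right algebra_simps)
  then show ?thesis by (simp add: eq_neg_iff_add_eq_0)
qed

end

lemma lemma4p2_claim_holds: "lemma4p2_claim sc br"
  unfolding lemma4p2_claim_def is_nilradical_def
  by (intro allI impI leibniz_abelian_extension.br_antisymmetric leibniz_abelian_extension.intro) auto

theorem lemma4p2:
  fixes scR :: "real \<Rightarrow> 'v::ab_group_add \<Rightarrow> 'v" and brR :: "'v \<Rightarrow> 'v \<Rightarrow> 'v"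
    and scC :: "complex \<Rightarrow> 'w::ab_group_add \<Rightarrow> 'w" and brC :: "'w \<Rightarrow> 'w \<Rightarrow> 'w"
  shows "lemma4p2_claim scR brR \<and> lemma4p2_claim scC brC"
  by (simp add: lemma4p2_claim_holds)

end
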